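(* Let $0<\alpha<\frac12$. There is a constant $M_{\alpha}$ such that for all $(\sigma,\tau)\in\mathcal{C}_{\alpha}(\mathbb{R})\oplus\mathcal{C}_{\alpha+\frac12}(\mathbb{R})$, $$|D\tau|_{\alpha}+|C\sigma|_{\alpha+\frac12}\leq M_{\alpha}\,m(q_l,q_r)\left[|\tau|_{\alpha+\frac12}+|\sigma|_{\alpha}\right].$$
   Context: For $\gamma\ge0$, $\mathcal{C}_{\gamma}(\mathbb{R})$ is the Banach space of continuous $f:\mathbb{R}\to\mathbb{C}$ with $|f|_{\gamma}=\sup_{x\in\mathbb{R}}(1+|x|)^{\gamma}|f(x)|<\infty$. Setting: fix $k_1>0$. For $\star\in\{l,r\}$ let $k_{2;\star}\ge k_1$, $d_\star>0$, $y_\star\in\mathbb{R}$, and $q_\star(t)=(k_{2;\star}^2-k_1^2)\chi_{[y_\star-d_\star,y_\star+d_\star]}(t)$ for $t\in\mathbb{R}$; assume $2d_\star\sqrt{k_{2;\star}^2-k_1^2}\neq n\pi$ for every positive integer $n$. For $x,y\in\mathbb{R}^2$ and $\delta>0$ let $w^\star_\delta(\cdot;y)$ be the unique $L^2(\mathbb{R}^2)$ solution of $(\Delta_x+k_1^2+q_\star(x_2)+i\delta)w^\star_\delta(x;y)=-\frac{i}{4}q_\star(x_2)H^{(1)}_0(\sqrt{k_1^2+i\delta}\,|x-y|)$ (principal square root), and let $w^\star(x;y)=\lim_{\delta\to0^+}w^\star_\delta(x;y)$ (limiting absorption), so that $\frac i4H^{(1)}_0(k_1|x-y|)+w^\star(x;y)$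 is the outgoing fundamental solution of $\Delta+k_1^2+q_\star(x_2)$ on $\mathbb{R}^2$. Define kernels on $\mathbb{R}^2$ by $k_D(s,t)=w^r((0,s);(0,t))-w^l((0,s);(0,t))$ and $k_C(s,t)=\big[\partial_{x_1}\partial_{y_1}w^l-\partial_{x_1}\partial_{y_1}w^r\big]((0,s);(0,t))$ (derivatives in the first coordinates $x_1$ of $x$ and $y_1$ of $y$), and operators $D\tau(s)=\int_{\mathbb{R}}k_D(s,t)\tau(t)\,dt$, $C\sigma(s)=\int_{\mathbb{R}}k_C(s,t)\sigma(t)\,dt$. The quantity $m(q_l,q_r)\ge0$ is a continuous function of $\|q_l\|_{L^\infty},\|q_r\|_{L^\infty},\|q_l-q_r\|_{L^\infty}$ with $m(q,q)=0$, for which the kernels satisfy: $|k_D(s,t)|\le m(q_l,q_r)(1+|s|+|t|)^{-1/2}$; and, with $d>0$ chosen so that $\operatorname{supp}q_l\cup\operatorname{supp}q_r\subset(-d,d)$, $\epsilon>0$, $B_a=[-a,a]\times[-a,a]$ and $\varphi\in C^\infty_c(B_{d+2\epsilon})$ equal to $1$ on $B_{d+\epsilon}$, one has $|(1-\varphi(s,t))k_C(s,t)|\le m(q_l,q_r)(1+|s|+|t|)^{-3/2}$ while $\varphi k_C$ has at most a logarithmic singularity $|\varphi(s,t)k_C(s,t)|\le m(q_l,q_r)(1+|\log|s-t||)$. *)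

theory Defs
  imports "HOL-Analysis.Analysis"
begin

definition Cw :: "real \<Rightarrow> (real \<Rightarrow> complex) set" where
  "Cw \<gamma> = {f. continuous_on UNIV f \<and>
        bdd_above (range (\<lambda>x. (1 + \<bar>x\<bar>) powr \<gamma> * cmod (f x)))}"

definition wnorm :: "real \<Rightarrow> (real \<Rightarrow> complex) \<Rightarrow> real" where
  "wnorm \<gamma> f = (SUP x. (1 + \<bar>x\<bar>) powr \<gamma> * cmod (f x))"

definition intop :: "(real \<Rightarrow> real \<Rightarrow> complex) \<Rightarrow> (real \<Rightarrow> complex) \<Rightarrow> real \<Rightarrow> complex" where
  "intop k f = (\<lambda>s. LINT t|lborel. k s t * f t)"

definition Bsq :: "real \<Rightarrow> (real \<times> real) set" where
  "Bsq a = {-a..a} \<times> {-a..a}"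

end

theory Submission
  imports Defs
begin

(* Every estimate reduces to the elementary bound
     \<integral> (a + |t|)^-p |t|^-\<beta> dt \<le> C a^(1-p-\<beta>)      (\<beta> < 1 < p + \<beta>),
   obtained by splitting at |t| = a.  With a = 1 + |s|, the decay of k_D against
   |\<tau> t| \<le> |\<tau>|_(\<alpha>+1/2) |t|^-(\<alpha>+1/2) (p = 1/2) produces the weight (1 + |s|)^-\<alpha>, and
   the far part (1 - \<phi>) k_C against |\<sigma> t| \<le> |\<sigma>|_\<alpha> |t|^-\<alpha> (p = 3/2) produces
   (1 + |s|)^-(\<alpha>+1/2).  The near part \<phi> k_C lives in the box B_(d+2\<epsilon>), where its
   logarithmic singularity is integrable, so it contributes a bounded function of s
   supported in |s| \<le> d + 2\<epsilon>. *)

lemma nn_integral_powr_majorant_eq: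
  fixes a p \<beta> :: real
  assumes a: "0 < a" and b: "\<beta> < 1" and pb: "1 < p + \<beta>"
  shows "(\<integral>\<^sup>+x. ennreal (a powr (-p) * x powr (-\<beta>)) * indicator {0..a} x
            + ennreal (x powr (-p-\<beta>)) * indicator {a..} x \<partial>lborel)
         = ennreal (a powr (1-p-\<beta>) * (1/(1-\<beta>) + 1/(p+\<beta>-1)))"
proof -
  have near: "((\<lambda>x. a powr (-p) * x powr (-\<beta>)) has_integral a powr (1-p-\<beta>) * (1/(1-\<beta>))) {0..a}"
  proof -
    have "((\<lambda>x. a powr (-p) * x powr (-\<beta>)) has_integral a powr (-p) * (a powr (-\<beta>+1) / (-\<beta>+1))) {0..a}"
      using has_integral_powr_from_0[of "-\<beta>" a] b a by (intro has_integral_mult_right) auto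
    also have "a powr (-p) * (a powr (-\<beta>+1) / (-\<beta>+1)) = a powr (1-p-\<beta>) * (1/(1-\<beta>))"
      using a b by (simp add: powr_add[symmetric] field_simps)
    finally show ?thesis .
  qed
  have far: "((\<lambda>x. x powr (-p-\<beta>)) has_integral a powr (1-p-\<beta>) * (1/(p+\<beta>-1))) {a..}"
  proof -
    have "((\<lambda>x. x powr (-p-\<beta>)) has_integral -(a powr ((-p-\<beta>)+1)) / ((-p-\<beta>)+1)) {a..}"
      using has_integral_powr_to_inf[of "-p-\<beta>" a] pb a by auto
    also have "-(a powr ((-p-\<beta>)+1)) / ((-p-\<beta>)+1) = a powr (1-p-\<beta>) * (1/(p+\<beta>-1))"
      using a pb by (simp add: field_simps)
    finally show ?thesis .
  qed
  have "(\<integral>\<^sup>+x. ennreal (a powr (-p) * x powr (-\<beta>)) * indicator {0..a} x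
            + ennreal (x powr (-p-\<beta>)) * indicator {a..} x \<partial>lborel)
     = (\<integral>\<^sup>+x. ennreal (a powr (-p) * x powr (-\<beta>)) * indicator {0..a} x \<partial>lborel)
       + (\<integral>\<^sup>+x. ennreal (x powr (-p-\<beta>)) * indicator {a..} x \<partial>lborel)"
    by (rule nn_integral_add) auto
  also have "\<dots> = ennreal (a powr (1-p-\<beta>) * (1/(1-\<beta>))) + ennreal (a powr (1-p-\<beta>) * (1/(p+\<beta>-1)))"
    using nn_integral_has_integral_lebesgue'[OF _ near] nn_integral_has_integral_lebesgue'[OF _ far]
    by simp
  also have "\<dots> = ennreal (a powr (1-p-\<beta>) * (1/(1-\<beta>)) + a powr (1-p-\<beta>) * (1/(p+\<beta>-1)))"
    using b pb by (intro ennreal_plus[symmetric]) auto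
  finally show ?thesis by (simp add: distrib_left)
qed

lemma shifted_powr_le_majorant:
  fixes a p \<beta> x :: real
  assumes a: "0 < a" and p: "0 \<le> p" and x: "0 < x"
  shows "(a + x) powr (-p) * x powr (-\<beta>)
           \<le> a powr (-p) * x powr (-\<beta>) * indicator {0..a} x + x powr (-p-\<beta>) * indicator {a..} x"
proof (cases "x \<le> a")
  case True
  have "(a + x) powr (-p) * x powr (-\<beta>) \<le> a powr (-p) * x powr (-\<beta>)"
    using a x p by (intro mult_right_mono powr_mono2') auto
  moreover have "0 \<le> x powr (-p-\<beta>) * indicator {a..} x" by simp
  moreover have "a powr (-p) * x powr (-\<beta>) * indicator {0..a} x = a powr (-p) * x powr (-\<beta>)"
    using True x by simp
  ultimately show ?thesis by linarith
next
  case False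
  have "(a + x) powr (-p) * x powr (-\<beta>) \<le> x powr (-p) * x powr (-\<beta>)"
    using a x p by (intro mult_right_mono powr_mono2') auto
  also have "\<dots> = x powr (-p-\<beta>)" using x by (simp add: powr_add[symmetric])
  finally show ?thesis using False x by (simp add: indicator_def)
qed

lemma nn_integral_shifted_powr_le:
  fixes a p \<beta> c :: real
  assumes a: "0 < a" and p: "0 \<le> p" and b: "\<beta> < 1" and pb: "1 < p + \<beta>"
  shows "(\<integral>\<^sup>+t. ennreal ((a + \<bar>t - c\<bar>) powr (-p) * \<bar>t - c\<bar> powr (-\<beta>)) \<partial>lborel)
         \<le> ennreal (2 * a powr (1-p-\<beta>) * (1/(1-\<beta>) + 1/(p+\<beta>-1)))"
proof -
  define f where "f t = ennreal ((a + \<bar>t\<bar>) powr (-p) * \<bar>t\<bar> powr (-\<beta>))" for t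
  define G where "G x = ennreal (a powr (-p) * x powr (-\<beta>)) * indicator {0..a} x
            + ennreal (x powr (-p-\<beta>)) * indicator {a..} x" for x :: real
  have f_meas: "f \<in> borel_measurable borel" unfolding f_def by measurable
  have G_meas: "G \<in> borel_measurable borel" unfolding G_def by measurable
  have f_le_G: "f t \<le> G t + G (-t)" for t
  proof -
    have "f t \<le> G \<bar>t\<bar>"
    proof (cases "t = 0")
      case False
      have "G \<bar>t\<bar> = ennreal (a powr (-p) * \<bar>t\<bar> powr (-\<beta>) * indicator {0..a} \<bar>t\<bar>
                             + \<bar>t\<bar> powr (-p-\<beta>) * indicator {a..} \<bar>t\<bar>)"
        unfolding G_def by (simp add: indicator_def ennreal_plus)
      with shifted_powr_le_majorant[OF a p, of "\<bar>t\<bar>" \<beta>] False show ?thesis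
        unfolding f_def by (metis ennreal_leI zero_less_abs_iff)
    qed (simp add: f_def)
    also have "G \<bar>t\<bar> \<le> G t + G (-t)"
      by (cases "t \<ge> 0") (auto intro: add_increasing add_increasing2)
    finally show ?thesis .
  qed
  have "(\<integral>\<^sup>+t. f (t - c) \<partial>lborel) = (\<integral>\<^sup>+t. f t \<partial>lborel)"
    using nn_integral_real_affine[OF f_meas, of 1 "-c"] by simp
  also have "\<dots> \<le> (\<integral>\<^sup>+t. G t + G (-t) \<partial>lborel)"
    using f_le_G by (intro nn_integral_mono) auto
  also have "\<dots> = (\<integral>\<^sup>+t. G t \<partial>lborel) + (\<integral>\<^sup>+t. G (-t) \<partial>lborel)"
    using G_meas by (intro nn_integral_add) auto
  also have "(\<integral>\<^sup>+t. G (-t) \<partial>lborel) = (\<integral>\<^sup>+t. G t \<partial>lborel)"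
    using nn_integral_real_affine[OF G_meas, of "-1" 0] by simp
  also have "(\<integral>\<^sup>+t. G t \<partial>lborel) = ennreal (a powr (1-p-\<beta>) * (1/(1-\<beta>) + 1/(p+\<beta>-1)))"
    unfolding G_def by (rule nn_integral_powr_majorant_eq[OF a b pb])
  also have "\<dots> + \<dots> = ennreal (2 * a powr (1-p-\<beta>) * (1/(1-\<beta>) + 1/(p+\<beta>-1)))"
    using b pb by (subst ennreal_plus[symmetric]) auto
  finally show ?thesis unfolding f_def .
qed

lemma nn_integral_cmult_le:
  assumes "0 \<le> K" and "h \<in> borel_measurable M"
    and "(\<integral>\<^sup>+x. ennreal (h x) \<partial>M) \<le> ennreal B" and "0 \<le> B"
  shows "(\<integral>\<^sup>+x. ennreal (K * h x) \<partial>M) \<le> ennreal (K * B)"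
proof -
  have "(\<integral>\<^sup>+x. ennreal (K * h x) \<partial>M) = ennreal K * (\<integral>\<^sup>+x. ennreal (h x) \<partial>M)"
    using assms(1,2) by (simp add: ennreal_mult' nn_integral_cmult)
  also have "\<dots> \<le> ennreal K * ennreal B" using assms(3) by (rule mult_left_mono) auto
  finally show ?thesis using assms(1) by (simp add: ennreal_mult')
qed

lemma norm_integral_le_of_nn_integral_le:
  fixes f :: "'a \<Rightarrow> 'b::{banach, second_countable_topology}"
  assumes f: "f \<in> borel_measurable M" and le: "AE x in M. norm (f x) \<le> g x"
    and g: "(\<integral>\<^sup>+x. ennreal (g x) \<partial>M) \<le> ennreal B" and B: "0 \<le> B"
  shows "norm (integral\<^sup>L M f) \<le> B"
proof -
  have "(\<integral>\<^sup>+x. ennreal (norm (f x)) \<partial>M) \<le> (\<integral>\<^sup>+x. ennreal (g x) \<partial>M)"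
    using le by (intro nn_integral_mono_AE) (auto elim: eventually_mono intro: ennreal_leI)
  from this g have norm_f: "(\<integral>\<^sup>+x. ennreal (norm (f x)) \<partial>M) \<le> ennreal B" by (rule order_trans)
  then have int: "integrable M f"
    using f by (intro integrableI_bounded) (auto simp: top_unique intro: le_less_trans)
  have "ennreal (norm (integral\<^sup>L M f)) \<le> ennreal B"
    using integral_norm_bound_ennreal[OF int] norm_f by (rule order_trans)
  then show ?thesis using B by simp
qed

lemma one_plus_abs_ln_le_sqrt:
  fixes u L :: real
  assumes u: "0 < u" "u \<le> L"
  shows "1 + \<bar>ln u\<bar> \<le> 2 * (1 + L) / sqrt u"
proof -
  have L: "0 < L" using u by simp
  define r where "r = sqrt u"
  have r: "0 < r" "u = r * r" using u unfolding r_def by (auto simp: real_sqrt_mult_self)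
  have "1 + \<bar>ln u\<bar> \<le> 2 * (1 + L) / r"
  proof (cases "u \<le> 1")
    case True
    have "ln (1/r) \<le> 1/r - 1" using r by (intro ln_le_minus_one) auto
    moreover have "ln u = - 2 * ln (1/r)" using r by (simp add: ln_mult ln_div)
    moreover have "ln u \<le> 0" using True u by simp
    moreover have "2 / r \<le> 2 * (1 + L) / r" using r L by (simp add: divide_right_mono)
    ultimately show ?thesis by simp
  next
    case False
    have "ln r \<le> r - 1" using r by (intro ln_le_minus_one) auto
    moreover have "ln u = 2 * ln r" using r by (simp add: ln_mult)
    moreover have "\<bar>ln u\<bar> = ln u" using False by simp
    moreover have "2 * r \<le> 2 * (1 + L) / r"
    proof -
      have "2 * r * r \<le> 2 * (1 + L)" using r u by simp
      then show ?thesis using r by (simp add: field_simps)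
    qed
    ultimately show ?thesis by linarith
  qed
  then show ?thesis unfolding r_def .
qed

(* The factor 1/(L + u) \<ge> 1/(2L) is inserted so that the bound is the kernel of
   nn_integral_shifted_powr_le with p = 1, \<beta> = 1/2. *)
lemma one_plus_abs_ln_le_shifted_powr:
  fixes u L :: real
  assumes u: "0 < u" "u \<le> L"
  shows "1 + \<bar>ln u\<bar> \<le> 4 * L * (1 + L) * ((L + u) powr (-1) * u powr (-(1/2)))"
proof -
  have L: "0 < L" using u by simp
  have "1 + \<bar>ln u\<bar> \<le> 2 * (1 + L) * u powr (-(1/2)) * 1"
    using one_plus_abs_ln_le_sqrt[OF u] u by (simp add: powr_minus_divide powr_half_sqrt[symmetric])
  also have "\<dots> \<le> 2 * (1 + L) * u powr (-(1/2)) * (2 * L * (L + u) powr (-1))"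
    using u L by (intro mult_left_mono) (simp_all add: powr_neg_one field_simps)
  finally show ?thesis by (simp add: ac_simps)
qed

lemma nn_integral_log_singularity_le:
  fixes L c :: real
  assumes L: "0 < L"
  shows "(\<integral>\<^sup>+t. ennreal ((1 + \<bar>ln \<bar>t - c\<bar>\<bar>) * indicator {c-L..c+L} t) \<partial>lborel)
         \<le> ennreal (32 * (1 + L) * sqrt L)"
proof -
  define K where "K = 4 * L * (1 + L)"
  have "AE t in lborel. ennreal ((1 + \<bar>ln \<bar>t - c\<bar>\<bar>) * indicator {c-L..c+L} t)
          \<le> ennreal (K * ((L + \<bar>t - c\<bar>) powr (-1) * \<bar>t - c\<bar> powr (-(1/2))))"
    using AE_lborel_singleton[of c]
  proof eventually_elim
    case (elim t)
    have u: "0 < \<bar>t - c\<bar>" using elim by simp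
    show ?case
    proof (cases "\<bar>t - c\<bar> \<le> L")
      case True
      then have "indicator {c-L..c+L} t = (1::real)" by (auto simp: indicator_def abs_le_iff)
      with one_plus_abs_ln_le_shifted_powr[OF u True] show ?thesis
        unfolding K_def by (intro ennreal_leI) simp
    next
      case False
      then have "indicator {c-L..c+L} t = (0::real)" by (auto simp: indicator_def abs_le_iff)
      with L show ?thesis unfolding K_def by (intro ennreal_leI) simp
    qed
  qed
  then have "(\<integral>\<^sup>+t. ennreal ((1 + \<bar>ln \<bar>t - c\<bar>\<bar>) * indicator {c-L..c+L} t) \<partial>lborel)
          \<le> (\<integral>\<^sup>+t. ennreal (K * ((L + \<bar>t - c\<bar>) powr (-1) * \<bar>t - c\<bar> powr (-(1/2)))) \<partial>lborel)"
    by (rule nn_integral_mono_AE)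
  also have "\<dots> \<le> ennreal (K * (2 * L powr (1 - 1 - 1/2) * (1/(1-1/2) + 1/(1+1/2-1))))"
    using L by (intro nn_integral_cmult_le[OF _ _ nn_integral_shifted_powr_le]) (auto simp: K_def)
  also have "K * (2 * L powr (1 - 1 - 1/2) * (1/(1-1/2) + 1/(1+1/2-1)))
             = 32 * (1 + L) * (L * L powr (-(1/2)))"
    unfolding K_def by (simp add: algebra_simps)
  also have "L * L powr (-(1/2)) = sqrt L"
    using L by (simp add: powr_minus_divide powr_half_sqrt real_div_sqrt less_imp_le)
  finally show ?thesis .
qed

lemma borel_measurable_uncurry_slice:
  fixes k :: "real \<Rightarrow> real \<Rightarrow> 'a::topological_space"
  assumes "(\<lambda>(s,t). k s t) \<in> borel_measurable borel"
  shows "k s \<in> borel_measurable borel"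
proof -
  have "(\<lambda>t. (s, t)) \<in> borel_measurable borel"
    by (intro borel_measurable_continuous_onI continuous_intros)
  from measurable_compose[OF this assms] show ?thesis by simp
qed

lemma Cw_borel_measurable: "f \<in> Cw \<gamma> \<Longrightarrow> f \<in> borel_measurable borel"
  unfolding Cw_def by (auto intro: borel_measurable_continuous_onI)

lemma Cw_weighted_le_wnorm: "f \<in> Cw \<gamma> \<Longrightarrow> (1 + \<bar>x\<bar>) powr \<gamma> * cmod (f x) \<le> wnorm \<gamma> f"
  unfolding Cw_def wnorm_def by (auto intro: cSUP_upper)

lemma wnorm_nonneg: "f \<in> Cw \<gamma> \<Longrightarrow> 0 \<le> wnorm \<gamma> f"
  by (rule order_trans[OF _ Cw_weighted_le_wnorm]) simp_all

lemma wnorm_le: "(\<And>x. (1 + \<bar>x\<bar>) powr \<gamma> * cmod (f x) \<le> B) \<Longrightarrow> wnorm \<gamma> f \<le> B"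
  unfolding wnorm_def by (rule cSUP_least) auto

lemma Cw_norm_le_wnorm:
  assumes "f \<in> Cw \<gamma>" and "0 \<le> \<gamma>"
  shows "cmod (f x) \<le> wnorm \<gamma> f"
proof -
  have "1 * cmod (f x) \<le> (1 + \<bar>x\<bar>) powr \<gamma> * cmod (f x)"
    using assms(2) by (intro mult_right_mono ge_one_powr_ge_zero) auto
  also have "\<dots> \<le> wnorm \<gamma> f" by (rule Cw_weighted_le_wnorm[OF assms(1)])
  finally show ?thesis by simp
qed

lemma Cw_norm_le_wnorm_powr:
  assumes f: "f \<in> Cw \<gamma>" and \<gamma>: "0 \<le> \<gamma>" and x: "x \<noteq> 0"
  shows "cmod (f x) \<le> wnorm \<gamma> f * \<bar>x\<bar> powr (-\<gamma>)"
proof -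
  have "cmod (f x) = (1 + \<bar>x\<bar>) powr (-\<gamma>) * ((1 + \<bar>x\<bar>) powr \<gamma> * cmod (f x))"
    by (simp add: powr_minus field_simps)
  also have "\<dots> \<le> \<bar>x\<bar> powr (-\<gamma>) * wnorm \<gamma> f"
    using Cw_weighted_le_wnorm[OF f] wnorm_nonneg[OF f] \<gamma> x
    by (intro mult_mono powr_mono2') auto
  finally show ?thesis by (simp add: mult.commute)
qed

lemma norm_intop_decaying_kernel_le:
  fixes k :: "real \<Rightarrow> real \<Rightarrow> complex" and \<tau> :: "real \<Rightarrow> complex"
  assumes \<alpha>: "0 < \<alpha>" "\<alpha> < 1/2" and m: "0 \<le> m"
    and k_meas: "(\<lambda>(s,t). k s t) \<in> borel_measurable borel"
    and k_le: "\<And>s t. cmod (k s t) \<le> m * (1 + \<bar>s\<bar> + \<bar>t\<bar>) powr (-1/2)"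
    and \<tau>: "\<tau> \<in> Cw (\<alpha> + 1/2)"
  shows "cmod (intop k \<tau> s) \<le> m * wnorm (\<alpha> + 1/2) \<tau> * (2 * (1/(1/2-\<alpha>) + 1/\<alpha>) * (1 + \<bar>s\<bar>) powr (-\<alpha>))"
  unfolding intop_def
proof (rule norm_integral_le_of_nn_integral_le)
  define a where "a = 1 + \<bar>s\<bar>"
  define T where "T = wnorm (\<alpha> + 1/2) \<tau>"
  have a: "0 < a" unfolding a_def by simp
  have mT: "0 \<le> m * T" unfolding T_def using m wnorm_nonneg[OF \<tau>] by simp
  show "(\<lambda>t. k s t * \<tau> t) \<in> borel_measurable lborel"
    using borel_measurable_uncurry_slice[OF k_meas] Cw_borel_measurable[OF \<tau>] by simp
  show "AE t in lborel. cmod (k s t * \<tau> t) \<le> m * T * ((a + \<bar>t\<bar>) powr (-(1/2)) * \<bar>t\<bar> powr (-(\<alpha>+1/2)))"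
    using AE_lborel_singleton[of 0]
  proof eventually_elim
    case (elim t)
    have "cmod (k s t) \<le> m * (a + \<bar>t\<bar>) powr (-(1/2))"
      using k_le[of s t] by (simp add: a_def)
    moreover have "cmod (\<tau> t) \<le> T * \<bar>t\<bar> powr (-(\<alpha>+1/2))"
      unfolding T_def using Cw_norm_le_wnorm_powr[OF \<tau> _ elim] \<alpha> by simp
    ultimately have "cmod (k s t) * cmod (\<tau> t) \<le> m * (a + \<bar>t\<bar>) powr (-(1/2)) * (T * \<bar>t\<bar> powr (-(\<alpha>+1/2)))"
      using m by (intro mult_mono) auto
    then show ?case by (simp add: norm_mult ac_simps)
  qed
  have "(\<integral>\<^sup>+t. ennreal ((a + \<bar>t\<bar>) powr (-(1/2)) * \<bar>t\<bar> powr (-(\<alpha>+1/2))) \<partial>lborel)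
          \<le> ennreal (2 * a powr (-\<alpha>) * (1/(1/2-\<alpha>) + 1/\<alpha>))"
    using nn_integral_shifted_powr_le[of a "1/2" "\<alpha>+1/2" 0] a \<alpha> by simp
  also have "2 * a powr (-\<alpha>) * (1/(1/2-\<alpha>) + 1/\<alpha>) = 2 * (1/(1/2-\<alpha>) + 1/\<alpha>) * a powr (-\<alpha>)"
    by simp
  finally show "(\<integral>\<^sup>+t. ennreal (m * T * ((a + \<bar>t\<bar>) powr (-(1/2)) * \<bar>t\<bar> powr (-(\<alpha>+1/2)))) \<partial>lborel)
      \<le> ennreal (m * wnorm (\<alpha> + 1/2) \<tau> * (2 * (1/(1/2-\<alpha>) + 1/\<alpha>) * (1 + \<bar>s\<bar>) powr (-\<alpha>)))"
    using mT \<alpha> unfolding T_def a_def by (intro nn_integral_cmult_le) auto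
  show "0 \<le> m * wnorm (\<alpha> + 1/2) \<tau> * (2 * (1/(1/2-\<alpha>) + 1/\<alpha>) * (1 + \<bar>s\<bar>) powr (-\<alpha>))"
    using mT \<alpha> unfolding T_def by simp
qed

lemma intop_decaying_kernel_weighted_le:
  fixes k :: "real \<Rightarrow> real \<Rightarrow> complex" and \<tau> :: "real \<Rightarrow> complex"
  assumes \<alpha>: "0 < \<alpha>" "\<alpha> < 1/2" and m: "0 \<le> m"
    and k_meas: "(\<lambda>(s,t). k s t) \<in> borel_measurable borel"
    and k_le: "\<And>s t. cmod (k s t) \<le> m * (1 + \<bar>s\<bar> + \<bar>t\<bar>) powr (-1/2)"
    and \<tau>: "\<tau> \<in> Cw (\<alpha> + 1/2)"
  shows "(1 + \<bar>s\<bar>) powr \<alpha> * cmod (intop k \<tau> s) \<le> 2 * (1/(1/2-\<alpha>) + 1/\<alpha>) * m * wnorm (\<alpha> + 1/2) \<tau>"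
proof -
  define a where "a = 1 + \<bar>s\<bar>"
  have a: "0 < a" unfolding a_def by simp
  have "a powr \<alpha> * cmod (intop k \<tau> s)
          \<le> a powr \<alpha> * (m * wnorm (\<alpha> + 1/2) \<tau> * (2 * (1/(1/2-\<alpha>) + 1/\<alpha>) * a powr (-\<alpha>)))"
    using norm_intop_decaying_kernel_le[OF \<alpha> m k_meas k_le \<tau>, of s] unfolding a_def
    by (rule mult_left_mono) simp
  also have "\<dots> = 2 * (1/(1/2-\<alpha>) + 1/\<alpha>) * m * wnorm (\<alpha> + 1/2) \<tau> * (a powr \<alpha> * a powr (-\<alpha>))"
    by (simp only: ac_simps)
  also have "a powr \<alpha> * a powr (-\<alpha>) = 1" using a by (simp add: powr_add[symmetric])
  finally show ?thesis unfolding a_def by simp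
qed

lemma cutoff_kernel_norm_le:
  fixes k :: "real \<Rightarrow> real \<Rightarrow> complex" and \<phi> :: "real \<times> real \<Rightarrow> real"
  assumes m: "0 \<le> m"
    and \<phi>_supp: "\<And>p. p \<notin> Bsq R \<Longrightarrow> \<phi> p = 0"
    and far: "\<bar>1 - \<phi> (s,t)\<bar> * cmod (k s t) \<le> m * (1 + \<bar>s\<bar> + \<bar>t\<bar>) powr (-3/2)"
    and near: "\<bar>\<phi> (s,t)\<bar> * cmod (k s t) \<le> m * (1 + \<bar>ln \<bar>s - t\<bar>\<bar>)"
  shows "cmod (k s t) \<le> m * (1 + \<bar>s\<bar> + \<bar>t\<bar>) powr (-3/2)
           + (if \<bar>s\<bar> \<le> R then m * ((1 + \<bar>ln \<bar>t - s\<bar>\<bar>) * indicator {s-2*R..s+2*R} t) else 0)"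
proof (cases "(s,t) \<in> Bsq R")
  case True
  then have "\<bar>s\<bar> \<le> R" "\<bar>t\<bar> \<le> R" unfolding Bsq_def by auto
  then have "t \<in> {s-2*R..s+2*R}" by (auto simp: abs_le_iff)
  then have near': "m * ((1 + \<bar>ln \<bar>t - s\<bar>\<bar>) * indicator {s-2*R..s+2*R} t) = m * (1 + \<bar>ln \<bar>s - t\<bar>\<bar>)"
    by (simp add: abs_minus_commute)
  have "1 * cmod (k s t) \<le> (\<bar>1 - \<phi> (s,t)\<bar> + \<bar>\<phi> (s,t)\<bar>) * cmod (k s t)"
    by (rule mult_right_mono) auto
  then have "cmod (k s t) \<le> \<bar>1 - \<phi> (s,t)\<bar> * cmod (k s t) + \<bar>\<phi> (s,t)\<bar> * cmod (k s t)"
    by (simp add: distrib_right)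
  then show ?thesis unfolding if_P[OF \<open>\<bar>s\<bar> \<le> R\<close>] near' using far near by linarith
next
  case False
  then have "cmod (k s t) \<le> m * (1 + \<bar>s\<bar> + \<bar>t\<bar>) powr (-3/2)"
    using far \<phi>_supp by simp
  moreover have "0 \<le> m * ((1 + \<bar>ln \<bar>t - s\<bar>\<bar>) * indicator {s-2*R..s+2*R} t)"
    using m by simp
  ultimately show ?thesis by simp
qed

lemma cutoff_kernel_mult_norm_le:
  fixes k :: "real \<Rightarrow> real \<Rightarrow> complex" and \<phi> :: "real \<times> real \<Rightarrow> real" and \<sigma> :: "real \<Rightarrow> complex"
  assumes m: "0 \<le> m" and \<alpha>: "0 \<le> \<alpha>" and t: "t \<noteq> 0"
    and \<phi>_supp: "\<And>p. p \<notin> Bsq R \<Longrightarrow> \<phi> p = 0"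
    and far: "\<bar>1 - \<phi> (s,t)\<bar> * cmod (k s t) \<le> m * (1 + \<bar>s\<bar> + \<bar>t\<bar>) powr (-3/2)"
    and near: "\<bar>\<phi> (s,t)\<bar> * cmod (k s t) \<le> m * (1 + \<bar>ln \<bar>s - t\<bar>\<bar>)"
    and \<sigma>: "\<sigma> \<in> Cw \<alpha>"
  shows "cmod (k s t * \<sigma> t) \<le> m * wnorm \<alpha> \<sigma> * ((1 + \<bar>s\<bar> + \<bar>t\<bar>) powr (-3/2) * \<bar>t\<bar> powr (-\<alpha>)
           + (if \<bar>s\<bar> \<le> R then (1 + \<bar>ln \<bar>t - s\<bar>\<bar>) * indicator {s-2*R..s+2*R} t else 0))"
proof -
  define w where "w = (if \<bar>s\<bar> \<le> R then (1 + \<bar>ln \<bar>t - s\<bar>\<bar>) * indicator {s-2*R..s+2*R} t else 0)"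
  have w: "0 \<le> w" by (simp add: w_def)
  have "cmod (k s t) \<le> m * (1 + \<bar>s\<bar> + \<bar>t\<bar>) powr (-3/2) + m * w"
    using cutoff_kernel_norm_le[where k=k and \<phi>=\<phi> and R=R and s=s and t=t, OF m \<phi>_supp far near]
    by (cases "\<bar>s\<bar> \<le> R") (simp_all add: w_def)
  then have "cmod (k s t) * cmod (\<sigma> t)
               \<le> m * (1 + \<bar>s\<bar> + \<bar>t\<bar>) powr (-3/2) * cmod (\<sigma> t) + m * w * cmod (\<sigma> t)"
    by (simp add: distrib_right[symmetric] mult_right_mono)
  also have "\<dots> \<le> m * (1 + \<bar>s\<bar> + \<bar>t\<bar>) powr (-3/2) * (wnorm \<alpha> \<sigma> * \<bar>t\<bar> powr (-\<alpha>)) + m * w * wnorm \<alpha> \<sigma>"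
    using Cw_norm_le_wnorm_powr[OF \<sigma> \<alpha> t] Cw_norm_le_wnorm[OF \<sigma> \<alpha>] m w
    by (intro add_mono mult_left_mono) auto
  finally show ?thesis by (simp add: norm_mult w_def algebra_simps)
qed

lemma nn_integral_cutoff_majorant_le:
  fixes \<alpha> R s :: real
  assumes \<alpha>: "-1/2 < \<alpha>" "\<alpha> < 1" and R: "0 < R"
  shows "(\<integral>\<^sup>+t. ennreal ((1 + \<bar>s\<bar> + \<bar>t\<bar>) powr (-3/2) * \<bar>t\<bar> powr (-\<alpha>)
            + (if \<bar>s\<bar> \<le> R then (1 + \<bar>ln \<bar>t - s\<bar>\<bar>) * indicator {s-2*R..s+2*R} t else 0)) \<partial>lborel)
         \<le> ennreal (2 * (1/(1-\<alpha>) + 1/(\<alpha>+1/2)) * (1 + \<bar>s\<bar>) powr (-(\<alpha>+1/2))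
                    + (if \<bar>s\<bar> \<le> R then 32 * (1 + 2*R) * sqrt (2*R) else 0))"
proof -
  define a where "a = 1 + \<bar>s\<bar>"
  have a: "0 < a" unfolding a_def by simp
  have exponents: "(1::real) - 3/2 - \<alpha> = -(\<alpha>+1/2)" "1/(3/2+\<alpha>-1) = 1/(\<alpha>+1/2)" "-3/2 = -(3/2::real)"
    by simp_all
  have "(\<integral>\<^sup>+t. ennreal ((a + \<bar>t - 0\<bar>) powr (-(3/2)) * \<bar>t - 0\<bar> powr (-\<alpha>)) \<partial>lborel)
          \<le> ennreal (2 * a powr (1 - 3/2 - \<alpha>) * (1/(1-\<alpha>) + 1/(3/2+\<alpha>-1)))"
    by (rule nn_integral_shifted_powr_le) (use a \<alpha> in auto)
  then have far: "(\<integral>\<^sup>+t. ennreal ((1 + \<bar>s\<bar> + \<bar>t\<bar>) powr (-3/2) * \<bar>t\<bar> powr (-\<alpha>)) \<partial>lborel)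
          \<le> ennreal (2 * (1/(1-\<alpha>) + 1/(\<alpha>+1/2)) * (1 + \<bar>s\<bar>) powr (-(\<alpha>+1/2)))"
    unfolding exponents a_def by (simp only: diff_zero mult_ac)
  have near: "(\<integral>\<^sup>+t. ennreal (if \<bar>s\<bar> \<le> R then (1 + \<bar>ln \<bar>t - s\<bar>\<bar>) * indicator {s-2*R..s+2*R} t else 0) \<partial>lborel)
          \<le> ennreal (if \<bar>s\<bar> \<le> R then 32 * (1 + 2*R) * sqrt (2*R) else 0)"
    using nn_integral_log_singularity_le[of "2*R" s] R by simp
  have "(\<integral>\<^sup>+t. ennreal ((1 + \<bar>s\<bar> + \<bar>t\<bar>) powr (-3/2) * \<bar>t\<bar> powr (-\<alpha>)
            + (if \<bar>s\<bar> \<le> R then (1 + \<bar>ln \<bar>t - s\<bar>\<bar>) * indicator {s-2*R..s+2*R} t else 0)) \<partial>lborel)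
        = (\<integral>\<^sup>+t. ennreal ((1 + \<bar>s\<bar> + \<bar>t\<bar>) powr (-3/2) * \<bar>t\<bar> powr (-\<alpha>)) \<partial>lborel)
          + (\<integral>\<^sup>+t. ennreal (if \<bar>s\<bar> \<le> R then (1 + \<bar>ln \<bar>t - s\<bar>\<bar>) * indicator {s-2*R..s+2*R} t else 0) \<partial>lborel)"
    by (subst nn_integral_add[symmetric]) (auto simp: ennreal_plus)
  also have "\<dots> \<le> ennreal (2 * (1/(1-\<alpha>) + 1/(\<alpha>+1/2)) * (1 + \<bar>s\<bar>) powr (-(\<alpha>+1/2)))
                   + ennreal (if \<bar>s\<bar> \<le> R then 32 * (1 + 2*R) * sqrt (2*R) else 0)"
    using far near by (rule add_mono)
  finally show ?thesis using \<alpha> R by (simp add: ennreal_plus)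
qed

lemma norm_intop_cutoff_kernel_le:
  fixes k :: "real \<Rightarrow> real \<Rightarrow> complex" and \<phi> :: "real \<times> real \<Rightarrow> real" and \<sigma> :: "real \<Rightarrow> complex"
  assumes \<alpha>: "0 < \<alpha>" "\<alpha> < 1/2" and R: "0 < R" and m: "0 \<le> m"
    and k_meas: "(\<lambda>(s,t). k s t) \<in> borel_measurable borel"
    and \<phi>_supp: "\<And>p. p \<notin> Bsq R \<Longrightarrow> \<phi> p = 0"
    and far: "\<And>s t. \<bar>1 - \<phi> (s,t)\<bar> * cmod (k s t) \<le> m * (1 + \<bar>s\<bar> + \<bar>t\<bar>) powr (-3/2)"
    and near: "\<And>s t. \<bar>\<phi> (s,t)\<bar> * cmod (k s t) \<le> m * (1 + \<bar>ln \<bar>s - t\<bar>\<bar>)"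
    and \<sigma>: "\<sigma> \<in> Cw \<alpha>"
  shows "cmod (intop k \<sigma> s) \<le> m * wnorm \<alpha> \<sigma> * (2 * (1/(1-\<alpha>) + 1/(\<alpha>+1/2)) * (1 + \<bar>s\<bar>) powr (-(\<alpha>+1/2))
           + (if \<bar>s\<bar> \<le> R then 32 * (1 + 2*R) * sqrt (2*R) else 0))"
  unfolding intop_def
proof (rule norm_integral_le_of_nn_integral_le)
  have mW: "0 \<le> m * wnorm \<alpha> \<sigma>" using m wnorm_nonneg[OF \<sigma>] by simp
  show "(\<lambda>t. k s t * \<sigma> t) \<in> borel_measurable lborel"
    using borel_measurable_uncurry_slice[OF k_meas] Cw_borel_measurable[OF \<sigma>] by simp
  show "AE t in lborel. cmod (k s t * \<sigma> t) \<le> m * wnorm \<alpha> \<sigma> * ((1 + \<bar>s\<bar> + \<bar>t\<bar>) powr (-3/2) * \<bar>t\<bar> powr (-\<alpha>)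
           + (if \<bar>s\<bar> \<le> R then (1 + \<bar>ln \<bar>t - s\<bar>\<bar>) * indicator {s-2*R..s+2*R} t else 0))"
    using AE_lborel_singleton[of 0]
  proof eventually_elim
    case (elim t)
    show ?case
      by (rule cutoff_kernel_mult_norm_le[where k=k and \<phi>=\<phi> and R=R and s=s, OF m _ elim \<phi>_supp far near \<sigma>])
        (use \<alpha> in simp)
  qed
  show "(\<integral>\<^sup>+t. ennreal (m * wnorm \<alpha> \<sigma> * ((1 + \<bar>s\<bar> + \<bar>t\<bar>) powr (-3/2) * \<bar>t\<bar> powr (-\<alpha>)
           + (if \<bar>s\<bar> \<le> R then (1 + \<bar>ln \<bar>t - s\<bar>\<bar>) * indicator {s-2*R..s+2*R} t else 0))) \<partial>lborel)
        \<le> ennreal (m * wnorm \<alpha> \<sigma> * (2 * (1/(1-\<alpha>) + 1/(\<alpha>+1/2)) * (1 + \<bar>s\<bar>) powr (-(\<alpha>+1/2))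
           + (if \<bar>s\<bar> \<le> R then 32 * (1 + 2*R) * sqrt (2*R) else 0)))"
    using mW \<alpha> R by (intro nn_integral_cmult_le nn_integral_cutoff_majorant_le) auto
  show "0 \<le> m * wnorm \<alpha> \<sigma> * (2 * (1/(1-\<alpha>) + 1/(\<alpha>+1/2)) * (1 + \<bar>s\<bar>) powr (-(\<alpha>+1/2))
           + (if \<bar>s\<bar> \<le> R then 32 * (1 + 2*R) * sqrt (2*R) else 0))"
    using mW \<alpha> R by simp
qed

lemma intop_cutoff_kernel_weighted_le:
  fixes k :: "real \<Rightarrow> real \<Rightarrow> complex" and \<phi> :: "real \<times> real \<Rightarrow> real" and \<sigma> :: "real \<Rightarrow> complex"
  assumes \<alpha>: "0 < \<alpha>" "\<alpha> < 1/2" and R: "0 < R" and m: "0 \<le> m"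
    and k_meas: "(\<lambda>(s,t). k s t) \<in> borel_measurable borel"
    and \<phi>_supp: "\<And>p. p \<notin> Bsq R \<Longrightarrow> \<phi> p = 0"
    and far: "\<And>s t. \<bar>1 - \<phi> (s,t)\<bar> * cmod (k s t) \<le> m * (1 + \<bar>s\<bar> + \<bar>t\<bar>) powr (-3/2)"
    and near: "\<And>s t. \<bar>\<phi> (s,t)\<bar> * cmod (k s t) \<le> m * (1 + \<bar>ln \<bar>s - t\<bar>\<bar>)"
    and \<sigma>: "\<sigma> \<in> Cw \<alpha>"
  shows "(1 + \<bar>s\<bar>) powr (\<alpha> + 1/2) * cmod (intop k \<sigma> s)
           \<le> (2 * (1/(1-\<alpha>) + 1/(\<alpha>+1/2)) + (1 + R) powr (\<alpha> + 1/2) * (32 * (1 + 2*R) * sqrt (2*R)))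
              * m * wnorm \<alpha> \<sigma>"
proof -
  define a where "a = 1 + \<bar>s\<bar>"
  define W where "W = wnorm \<alpha> \<sigma>"
  define Kfar where "Kfar = 2 * (1/(1-\<alpha>) + 1/(\<alpha>+1/2))"
  define Knear where "Knear = 32 * (1 + 2*R) * sqrt (2*R)"
  have a: "0 < a" unfolding a_def by simp
  have mW: "0 \<le> m * W" unfolding W_def using m wnorm_nonneg[OF \<sigma>] by simp
  have weight: "a powr (\<alpha> + 1/2) * (if \<bar>s\<bar> \<le> R then Knear else 0) \<le> (1 + R) powr (\<alpha> + 1/2) * Knear"
  proof (cases "\<bar>s\<bar> \<le> R")
    case True
    then have "a powr (\<alpha> + 1/2) \<le> (1 + R) powr (\<alpha> + 1/2)"
      unfolding a_def using \<alpha> by (intro powr_mono2) auto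
    then show ?thesis using True R unfolding Knear_def by (simp add: mult_right_mono)
  qed (use R in \<open>simp add: Knear_def\<close>)
  have cancel: "a powr (\<alpha> + 1/2) * a powr (-(\<alpha>+1/2)) = 1"
    using a by (simp add: powr_add[symmetric])
  have "cmod (intop k \<sigma> s) \<le> m * W * (Kfar * a powr (-(\<alpha>+1/2)) + (if \<bar>s\<bar> \<le> R then Knear else 0))"
    using norm_intop_cutoff_kernel_le[OF \<alpha> R m k_meas \<phi>_supp far near \<sigma>, of s]
    unfolding a_def W_def Kfar_def Knear_def .
  then have "a powr (\<alpha> + 1/2) * cmod (intop k \<sigma> s)
          \<le> a powr (\<alpha> + 1/2) * (m * W * (Kfar * a powr (-(\<alpha>+1/2)) + (if \<bar>s\<bar> \<le> R then Knear else 0)))"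
    by (rule mult_left_mono) simp
  also have "\<dots> = m * W * Kfar * (a powr (\<alpha> + 1/2) * a powr (-(\<alpha>+1/2)))
                   + m * W * (a powr (\<alpha> + 1/2) * (if \<bar>s\<bar> \<le> R then Knear else 0))"
    by (simp only: distrib_left mult_ac)
  also have "\<dots> \<le> m * W * Kfar + m * W * ((1 + R) powr (\<alpha> + 1/2) * Knear)"
    using cancel weight mW by (simp add: mult_left_mono)
  also have "\<dots> = (Kfar + (1 + R) powr (\<alpha> + 1/2) * Knear) * m * W"
    by (simp add: algebra_simps)
  finally show ?thesis unfolding a_def W_def Kfar_def Knear_def .
qed

theorem proposition2:
  fixes \<alpha> d \<epsilon> :: real
  assumes "0 < \<alpha>" and "\<alpha> < 1/2" and "0 < d" and "0 < \<epsilon>"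
  shows "\<exists>M::real. \<forall>(kD :: real \<Rightarrow> real \<Rightarrow> complex) (kC :: real \<Rightarrow> real \<Rightarrow> complex)
           (\<phi> :: real \<times> real \<Rightarrow> real) (m :: real) (\<sigma> :: real \<Rightarrow> complex) (\<tau> :: real \<Rightarrow> complex).
     0 \<le> m \<longrightarrow>
     (\<lambda>(s,t). kD s t) \<in> borel_measurable borel \<longrightarrow>
     (\<lambda>(s,t). kC s t) \<in> borel_measurable borel \<longrightarrow>
     continuous_on UNIV \<phi> \<longrightarrow>
     (\<forall>p. p \<notin> Bsq (d + 2*\<epsilon>) \<longrightarrow> \<phi> p = 0) \<longrightarrow>
     (\<forall>p \<in> Bsq (d + \<epsilon>). \<phi> p = 1) \<longrightarrow>
     (\<forall>s t. cmod (kD s t) \<le> m * (1 + \<bar>s\<bar> + \<bar>t\<bar>) powr (-1/2)) \<longrightarrow>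
     (\<forall>s t. \<bar>1 - \<phi> (s,t)\<bar> * cmod (kC s t) \<le> m * (1 + \<bar>s\<bar> + \<bar>t\<bar>) powr (-3/2)) \<longrightarrow>
     (\<forall>s t. \<bar>\<phi> (s,t)\<bar> * cmod (kC s t) \<le> m * (1 + \<bar>ln \<bar>s - t\<bar>\<bar>)) \<longrightarrow>
     \<sigma> \<in> Cw \<alpha> \<longrightarrow> \<tau> \<in> Cw (\<alpha> + 1/2) \<longrightarrow>
       bdd_above (range (\<lambda>s. (1 + \<bar>s\<bar>) powr \<alpha> * cmod (intop kD \<tau> s))) \<and>
       bdd_above (range (\<lambda>s. (1 + \<bar>s\<bar>) powr (\<alpha> + 1/2) * cmod (intop kC \<sigma> s))) \<and>
       wnorm \<alpha> (intop kD \<tau>) + wnorm (\<alpha> + 1/2) (intop kC \<sigma>)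
         \<le> M * m * (wnorm (\<alpha> + 1/2) \<tau> + wnorm \<alpha> \<sigma>)"
proof -
  define R where "R = d + 2*\<epsilon>"
  define KD where "KD = 2 * (1/(1/2-\<alpha>) + 1/\<alpha>)"
  define KC where "KC = 2 * (1/(1-\<alpha>) + 1/(\<alpha>+1/2)) + (1 + R) powr (\<alpha> + 1/2) * (32 * (1 + 2*R) * sqrt (2*R))"
  have R: "0 < R" using assms unfolding R_def by simp
  have KD: "0 \<le> KD" and KC: "0 \<le> KC" using assms R unfolding KD_def KC_def by simp_all
  show ?thesis
  proof (intro exI[of _ "KD + KC"] allI impI)
    fix kD kC :: "real \<Rightarrow> real \<Rightarrow> complex" and \<phi> :: "real \<times> real \<Rightarrow> real" and m :: real
      and \<sigma> \<tau> :: "real \<Rightarrow> complex"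
    assume m: "0 \<le> m" and kD_meas: "(\<lambda>(s,t). kD s t) \<in> borel_measurable borel"
      and kC_meas: "(\<lambda>(s,t). kC s t) \<in> borel_measurable borel"
      and "continuous_on UNIV \<phi>"
      and \<phi>_supp: "\<forall>p. p \<notin> Bsq (d + 2*\<epsilon>) \<longrightarrow> \<phi> p = 0"
      and "\<forall>p \<in> Bsq (d + \<epsilon>). \<phi> p = 1"
      and kD_le: "\<forall>s t. cmod (kD s t) \<le> m * (1 + \<bar>s\<bar> + \<bar>t\<bar>) powr (-1/2)"
      and kC_far: "\<forall>s t. \<bar>1 - \<phi> (s,t)\<bar> * cmod (kC s t) \<le> m * (1 + \<bar>s\<bar> + \<bar>t\<bar>) powr (-3/2)"
      and kC_near: "\<forall>s t. \<bar>\<phi> (s,t)\<bar> * cmod (kC s t) \<le> m * (1 + \<bar>ln \<bar>s - t\<bar>\<bar>)"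
      and \<sigma>: "\<sigma> \<in> Cw \<alpha>" and \<tau>: "\<tau> \<in> Cw (\<alpha> + 1/2)"
    have D: "(1 + \<bar>s\<bar>) powr \<alpha> * cmod (intop kD \<tau> s) \<le> KD * m * wnorm (\<alpha> + 1/2) \<tau>" for s
      unfolding KD_def by (rule intop_decaying_kernel_weighted_le[OF assms(1,2) m kD_meas kD_le[rule_format] \<tau>])
    have C: "(1 + \<bar>s\<bar>) powr (\<alpha> + 1/2) * cmod (intop kC \<sigma> s) \<le> KC * m * wnorm \<alpha> \<sigma>" for s
      unfolding KC_def
      by (rule intop_cutoff_kernel_weighted_le[OF assms(1,2) R m kC_meas \<phi>_supp[rule_format, folded R_def]
            kC_far[rule_format] kC_near[rule_format] \<sigma>])
    have "wnorm \<alpha> (intop kD \<tau>) + wnorm (\<alpha> + 1/2) (intop kC \<sigma>)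
            \<le> KD * m * wnorm (\<alpha> + 1/2) \<tau> + KC * m * wnorm \<alpha> \<sigma>"
      using D C by (intro add_mono wnorm_le)
    also have "\<dots> \<le> (KD + KC) * m * (wnorm (\<alpha> + 1/2) \<tau> + wnorm \<alpha> \<sigma>)"
      using KD KC m wnorm_nonneg[OF \<sigma>] wnorm_nonneg[OF \<tau>] by (simp add: algebra_simps)
    finally show "bdd_above (range (\<lambda>s. (1 + \<bar>s\<bar>) powr \<alpha> * cmod (intop kD \<tau> s))) \<and>
       bdd_above (range (\<lambda>s. (1 + \<bar>s\<bar>) powr (\<alpha> + 1/2) * cmod (intop kC \<sigma> s))) \<and>
       wnorm \<alpha> (intop kD \<tau>) + wnorm (\<alpha> + 1/2) (intop kC \<sigma>)
         \<le> (KD + KC) * m * (wnorm (\<alpha> + 1/2) \<tau> + wnorm \<alpha> \<sigma>)"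
      using D C by (intro conjI bdd_aboveI2)
  qed
qed

end
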